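(* Let $\mathcal T=(V,E,o)$ be the deterministic rooted tree in which every vertex at distance $k\ge0$ from the root has exactly $4^k$ children. Fix $T\in(0,\infty)$ and a family of strictly positive constants $(C_{k,T})_{k\in\mathbb N}$, non-decreasing in $k$, and let $N^{T}_v(A):=N_v(A\times(0,C_{|\mathrm{cl}_v|,T}]\times\mathcal J)$ for Borel $A\subseteq[0,T]$, where $(N_v)_{v\in V}$ are i.i.d. Poisson random measures on $\mathbb R_+^2\times\mathcal J$ with intensity $\mathrm{Leb}^2\otimes\varsigma$ ($\varsigma$ a finite measure on the countable set $\mathcal J$ with $\varsigma(\mathcal J)>0$). Then with probability one there exists an infinite $(\mathcal T,N^T)$-causal chain.
   Context: $\mathrm{cl}_v$ denotes $v$ together with its neighbours. Causal chains: for an interval $[t_1,t_2]\subseteq[0,T]$ and vertices $u,v$, a causal chain from $v$ to $u$ during $[t_1,t_2]$ is a path $(v=u_0,u_1,\dots,u_n=u)$ in the graph (consecutive vertices adjacent, vertices distinct) such that, if $n\ge1$, there are times $t_1=s_0<s_1<\dots<s_n\le t_2$ with $N^T_{u_i}(\{s_i\})=1$ (i.e. $s_i$ is an atom of $N^T_{u_i}$) for $i=1,\dots,n$. An infinite causal chain ending at a vertex $u$ is an infinite path $(u=u_0,u_1,u_2,\dots)$ of distinct vertices such that for every $n\in\mathbb N$, $(u_n,u_{n-1},\dots,u_0)$ is a causal chain from $u_n$ to $u_0$ during $[0,T]$. *)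

theory Defs
  imports "HOL-Probability.Probability"
begin

text \<open>Vertices are the finite words xs with xs!i < 4^i for all i; the root is the empty
word, and the children of a vertex xs at depth k = length xs are xs@[j] for j < 4^k.\<close>

definition tree_V :: "nat list set" where
  "tree_V = {xs. \<forall>i<length xs. xs ! i < 4 ^ i}"

definition tree_adj :: "nat list \<Rightarrow> nat list \<Rightarrow> bool" where
  "tree_adj u v \<longleftrightarrow> u \<in> tree_V \<and> v \<in> tree_V \<and> (\<exists>j. v = u @ [j] \<or> u = v @ [j])"

definition tree_cl :: "nat list \<Rightarrow> nat list set" where
  "tree_cl v = insert v {u. tree_adj v u}"

definition poisson_rm :: "'w measure \<Rightarrow> 's measure \<Rightarrow> ('w \<Rightarrow> 's measure) \<Rightarrow> bool" where
  "poisson_rm M \<mu> N \<longleftrightarrow>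
     (\<forall>\<omega>\<in>space M. sets (N \<omega>) = sets \<mu>) \<and>
     (\<forall>A\<in>sets \<mu>. (\<lambda>\<omega>. emeasure (N \<omega>) A) \<in> borel_measurable M) \<and>
     (\<forall>A\<in>sets \<mu>. emeasure \<mu> A < \<infinity> \<longrightarrow>
        (\<forall>n::nat. measure M {\<omega>\<in>space M. emeasure (N \<omega>) A = of_nat n}
            = exp (- enn2real (emeasure \<mu> A)) * enn2real (emeasure \<mu> A) ^ n / fact n)) \<and>
     (\<forall>A\<in>sets \<mu>. emeasure \<mu> A = \<infinity> \<longrightarrow> (AE \<omega> in M. emeasure (N \<omega>) A = \<infinity>)) \<and>
     (\<forall>(I::nat set) A. finite I \<longrightarrow> A ` I \<subseteq> sets \<mu> \<longrightarrow> disjoint_family_on A I \<longrightarrow>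
        prob_space.indep_vars M (\<lambda>_. borel) (\<lambda>i \<omega>. emeasure (N \<omega>) (A i)) I)"

text \<open>Independence of a family of random measures (as random elements of the product
space of their evaluations on all measurable sets).\<close>

definition indep_rms :: "'w measure \<Rightarrow> 's measure \<Rightarrow> ('v \<Rightarrow> 'w \<Rightarrow> 's measure) \<Rightarrow> 'v set \<Rightarrow> bool" where
  "indep_rms M \<mu> N I \<longleftrightarrow>
     prob_space.indep_vars M (\<lambda>_. Pi\<^sub>M (sets \<mu>) (\<lambda>_. borel))
       (\<lambda>v \<omega>. \<lambda>A\<in>sets \<mu>. emeasure (N v \<omega>) A) I"

definition intensity :: "'j measure \<Rightarrow> (real \<times> real \<times> 'j) measure" where
  "intensity \<sigma> = restrict_space lborel {0..} \<Otimes>\<^sub>M (restrict_space lborel {0..} \<Otimes>\<^sub>M \<sigma>)"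

text \<open>atom v s means that s is an atom of the point measure N^T_v.\<close>

definition causal_chain ::
  "('v \<Rightarrow> 'v \<Rightarrow> bool) \<Rightarrow> ('v \<Rightarrow> real \<Rightarrow> bool) \<Rightarrow> real \<Rightarrow> real \<Rightarrow> 'v list \<Rightarrow> bool" where
  "causal_chain adj atom t1 t2 ws \<longleftrightarrow>
     ws \<noteq> [] \<and> distinct ws \<and> (\<forall>i. Suc i < length ws \<longrightarrow> adj (ws ! i) (ws ! Suc i)) \<and>
     (2 \<le> length ws \<longrightarrow>
        (\<exists>s::nat \<Rightarrow> real. s 0 = t1 \<and> (\<forall>i. Suc i < length ws \<longrightarrow> s i < s (Suc i)) \<and>
           s (length ws - 1) \<le> t2 \<and> (\<forall>i. 1 \<le> i \<and> i < length ws \<longrightarrow> atom (ws ! i) (s i))))"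

definition infinite_causal_chain ::
  "('v \<Rightarrow> 'v \<Rightarrow> bool) \<Rightarrow> ('v \<Rightarrow> real \<Rightarrow> bool) \<Rightarrow> real \<Rightarrow> 'v \<Rightarrow> (nat \<Rightarrow> 'v) \<Rightarrow> bool" where
  "infinite_causal_chain adj atom T u us \<longleftrightarrow>
     us 0 = u \<and> inj us \<and>
     (\<forall>n. causal_chain adj atom 0 T (rev (map us [0..<Suc n])))"

definition NT_atom :: "(nat \<Rightarrow> real) \<Rightarrow> (nat list \<Rightarrow> (real \<times> real \<times> 'j) measure) \<Rightarrow> nat list \<Rightarrow> real \<Rightarrow> bool" where
  "NT_atom C Nw v s \<longleftrightarrow>
     emeasure (Nw v) ({s} \<times> ({0<..C (card (tree_cl v))} \<times> UNIV)) = 1"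

end

theory Submission
  imports Defs "HOL-Real_Asymp.Real_Asymp"
begin

text \<open>Give the vertices of depth d the time window (T/2^(d+1), T/2^d], and call a vertex lit if
  N^T_v has a point in the window of its depth; since C is non-decreasing, marks in (0, C_0] already
  count. Each child of a vertex of depth k is unlit with probability at most exp(-c 2^-(k+2)), with
  c = T C_0 varsigma(J), independently, so all 4^k children of that vertex are unlit with probability
  at most exp(-c 2^k / 4). As there are at most 4^(k^2) vertices of depth k and
  4^(k^2) exp(-c 2^k / 4) is summable, by Borel-Cantelli almost surely from some depth on every
  vertex has a lit child. Following lit children downwards gives an infinite path of vertices whose
  window times strictly decrease, and read upwards such a path is a causal chain.

  The points found are atoms of mass exactly one: almost surely a Poisson random measure is
  integer valued on all intervals with rational end points, and it has no multiple points, because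
  a multiple point in a partition into n cells has probability O(1/n).\<close>

locale poisson_random_measure = prob_space M for M :: "'w measure" +
  fixes \<mu> :: "'s measure" and N :: "'w \<Rightarrow> 's measure"
  assumes poisson: "poisson_rm M \<mu> N"
begin

lemma measurable_count [measurable]:
  "A \<in> sets \<mu> \<Longrightarrow> (\<lambda>\<omega>. emeasure (N \<omega>) A) \<in> borel_measurable M"
  using poisson unfolding poisson_rm_def by auto

lemma prob_count_eq:
  assumes "A \<in> sets \<mu>" "emeasure \<mu> A < \<infinity>"
  shows "prob {\<omega>\<in>space M. emeasure (N \<omega>) A = of_nat n}
    = exp (- measure \<mu> A) * measure \<mu> A ^ n / fact n"
  using poisson assms unfolding poisson_rm_def measure_def by auto

lemma AE_count_nat:
  assumes A: "A \<in> sets \<mu>" and fin: "emeasure \<mu> A < \<infinity>"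
  shows "AE \<omega> in M. \<exists>n::nat. emeasure (N \<omega>) A = of_nat n"
proof -
  define c where "c = measure \<mu> A"
  define E where "E n = {\<omega>\<in>space M. emeasure (N \<omega>) A = of_nat n}" for n :: nat
  have E_sets: "E n \<in> sets M" for n
    unfolding E_def using A by measurable
  have "(\<lambda>n. prob (E n)) sums prob (\<Union>n. E n)"
    using E_sets by (intro finite_measure_UNION) (auto simp: disjoint_family_on_def E_def)
  moreover have "(\<lambda>n. prob (E n)) = (\<lambda>n. exp (-c) * (c ^ n /\<^sub>R fact n))"
    using prob_count_eq[OF A fin] unfolding E_def c_def by (auto simp: divide_simps)
  moreover have "(\<lambda>n. exp (-c) * (c ^ n /\<^sub>R fact n)) sums (exp (-c) * exp c)"
    by (intro sums_mult exp_converges)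
  ultimately have "prob (\<Union>n. E n) = exp (-c) * exp c"
    using sums_unique2 by metis
  then have "prob (\<Union>n. E n) = 1"
    by (simp flip: exp_minus exp_add)
  then have "space M - (\<Union>n. E n) \<in> null_sets M"
    using E_sets by (auto simp: emeasure_eq_measure prob_compl intro!: null_setsI)
  then show ?thesis
    by (rule AE_I') (auto simp: E_def)
qed

lemma prob_count_gt_one_le:
  assumes A: "A \<in> sets \<mu>" and fin: "emeasure \<mu> A < \<infinity>"
  shows "prob {\<omega>\<in>space M. 1 < emeasure (N \<omega>) A} \<le> (measure \<mu> A)\<^sup>2"
proof -
  define c where "c = measure \<mu> A"
  define E where "E n = {\<omega>\<in>space M. emeasure (N \<omega>) A = of_nat n}" for n :: nat
  have E_sets: "E n \<in> sets M" for n
    unfolding E_def using A by measurable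
  have "prob {\<omega>\<in>space M. 1 < emeasure (N \<omega>) A} \<le> prob (space M - (E 0 \<union> E 1))"
    using E_sets[of 0] E_sets[of 1] by (intro finite_measure_mono) (auto simp: E_def)
  also have "\<dots> = 1 - prob (E 0 \<union> E 1)"
    using E_sets by (subst prob_compl) auto
  also have "prob (E 0 \<union> E 1) = prob (E 0) + prob (E 1)"
    using E_sets[of 0] E_sets[of 1] by (intro finite_measure_Union) (auto simp: E_def)
  also have "prob (E 0) = exp (-c)"
    using prob_count_eq[OF A fin, of 0] by (simp add: E_def c_def)
  also have "prob (E 1) = exp (-c) * c"
    using prob_count_eq[OF A fin, of 1] by (simp add: E_def c_def)
  also have "1 - (exp (-c) + exp (-c) * c) \<le> c\<^sup>2"
  proof -
    have "(1 - c) * (1 + c) \<le> exp (-c) * (1 + c)"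
      using exp_ge_add_one_self[of "-c"] by (intro mult_right_mono) (auto simp: c_def)
    then show ?thesis by (simp add: algebra_simps power2_eq_square)
  qed
  finally show ?thesis unfolding c_def .
qed

end

context
  fixes \<sigma> :: "'j measure"
  assumes finite_\<sigma>: "finite_measure \<sigma>" and sets_\<sigma>: "sets \<sigma> = Pow UNIV"
begin

lemma sets_restrict_nonneg: "X \<in> sets borel \<Longrightarrow> X \<subseteq> {0..} \<Longrightarrow> X \<in> sets (restrict_space lborel {0::real..})"
  by (subst sets_restrict_space_iff) auto

lemma emeasure_restrict_nonneg:
  "X \<subseteq> {0..} \<Longrightarrow> emeasure (restrict_space lborel {0::real..}) X = emeasure lborel X"
  by (rule emeasure_restrict_space) auto

lemma sigma_finite_restrict_nonneg: "sigma_finite_measure (restrict_space lborel {0::real..})"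
  by (rule sigma_finite_measure_restrict_space) (auto simp: lborel.sigma_finite_measure_axioms)

lemma sets_intensity_strip:
  "X \<in> sets borel \<Longrightarrow> X \<subseteq> {0..} \<Longrightarrow> X \<times> ({0<..c} \<times> UNIV) \<in> sets (intensity \<sigma>)"
  unfolding intensity_def by (intro pair_measureI sets_restrict_nonneg) (auto simp: sets_\<sigma>)

lemma emeasure_intensity_strip_Ioc:
  assumes "0 \<le> l" "l \<le> r" "0 \<le> c"
  shows "emeasure (intensity \<sigma>) ({l<..r} \<times> ({0<..c} \<times> UNIV)) = ennreal ((r - l) * c * measure \<sigma> UNIV)"
proof -
  let ?R = "restrict_space lborel {0::real..}"
  interpret \<sigma>: finite_measure \<sigma> by (rule finite_\<sigma>)
  have R\<sigma>_finite: "sigma_finite_measure (?R \<Otimes>\<^sub>M \<sigma>)"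
    by (intro sigma_finite_pair_measure sigma_finite_restrict_nonneg) unfold_locales
  have "emeasure (intensity \<sigma>) ({l<..r} \<times> ({0<..c} \<times> UNIV))
      = emeasure ?R {l<..r} * emeasure (?R \<Otimes>\<^sub>M \<sigma>) ({0<..c} \<times> UNIV)"
    unfolding intensity_def using assms
    by (intro sigma_finite_measure.emeasure_pair_measure_Times[OF R\<sigma>_finite] sets_restrict_nonneg
        pair_measureI) (auto simp: sets_\<sigma>)
  also have "emeasure (?R \<Otimes>\<^sub>M \<sigma>) ({0<..c} \<times> UNIV) = emeasure ?R {0<..c} * emeasure \<sigma> UNIV"
    using assms by (intro \<sigma>.emeasure_pair_measure_Times sets_restrict_nonneg) (auto simp: sets_\<sigma>)
  finally show ?thesis
    using assms emeasure_restrict_nonneg[of "{l<..r}"] emeasure_restrict_nonneg[of "{0<..c}"]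
    by (simp add: subset_eq ennreal_mult' \<sigma>.emeasure_eq_measure mult.assoc)
qed

end

section \<open>Unit atoms of integer valued measures\<close>

locale strip_measure =
  fixes \<nu> :: "(real \<times> 'b) measure" and B :: "'b set"
  assumes sets_strip: "\<And>X. X \<in> sets borel \<Longrightarrow> X \<subseteq> {0..} \<Longrightarrow> X \<times> B \<in> sets \<nu>"
begin

lemma strip_Ioc_mono: "0 \<le> a \<Longrightarrow> t \<le> t' \<Longrightarrow> emeasure \<nu> ({a<..t} \<times> B) \<le> emeasure \<nu> ({a<..t'} \<times> B)"
  by (intro emeasure_mono sets_strip) auto

lemma null_strip_Ioo:
  assumes "0 \<le> a" and zero: "\<And>t. a < t \<Longrightarrow> t < s \<Longrightarrow> emeasure \<nu> ({a<..t} \<times> B) = 0"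
  shows "emeasure \<nu> ({a<..<s} \<times> B) = 0"
proof -
  have "{a<..<s} \<times> B = (\<Union>q\<in>\<rat> \<inter> {a<..<s}. {a<..q} \<times> B)"
  proof safe
    fix x y assume "x \<in> {a<..<s}" "y \<in> B"
    moreover obtain q where "q \<in> \<rat>" "x < q" "q < s"
      using Rats_dense_in_real \<open>x \<in> {a<..<s}\<close> by auto
    ultimately show "(x, y) \<in> (\<Union>q\<in>\<rat> \<inter> {a<..<s}. {a<..q} \<times> B)"
      by (intro UN_I[of q]) auto
  qed auto
  also have "\<dots> \<in> null_sets \<nu>"
  proof (intro null_sets_UN' countable_Int1 countable_rat)
    fix q assume "q \<in> \<rat> \<inter> {a<..<s}"
    then show "{a<..q} \<times> B \<in> null_sets \<nu>"
      using assms by (auto intro!: null_setsI sets_strip)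
  qed
  finally show ?thesis by auto
qed

lemma strip_Ioc_right_limit:
  assumes "0 \<le> a" "s < b" and finite: "emeasure \<nu> ({a<..b} \<times> B) < \<infinity>"
    and ge: "\<And>t. s < t \<Longrightarrow> t \<le> b \<Longrightarrow> c \<le> emeasure \<nu> ({a<..t} \<times> B)"
  shows "c \<le> emeasure \<nu> ({a<..s} \<times> B)"
proof -
  define r where "r i = s + (b - s) / Suc i" for i :: nat
  have r_gt: "s < r i" and r_le: "r i \<le> b" for i
    using \<open>s < b\<close> by (auto simp: r_def field_simps intro: mult_right_mono)
  have r_Suc: "r (Suc i) \<le> r i" for i
    using \<open>s < b\<close> by (simp add: r_def frac_le)
  have decseq: "decseq (\<lambda>i. {a<..r i} \<times> B)"
    by (intro decseq_SucI) (auto intro: order_trans[OF _ r_Suc])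
  have "r \<longlonglongrightarrow> s"
    using tendsto_add[OF tendsto_const LIMSEQ_Suc[OF lim_const_over_n[of "b - s"]], of s]
    unfolding r_def[abs_def] by simp
  then have "x \<le> s" if "\<forall>i. x \<le> r i" for x
    by (rule LIMSEQ_le_const) (use that in auto)
  moreover have "x \<le> r i" if "x \<le> s" for x i
    using r_gt[of i] that by linarith
  ultimately have Inter: "(\<Inter>i. {a<..r i} \<times> B) = {a<..s} \<times> B"
    by auto
  have "emeasure \<nu> ({a<..r 0} \<times> B) \<noteq> \<infinity>"
    using strip_Ioc_mono[OF \<open>0 \<le> a\<close> r_le[of 0]] finite by (auto simp: top.not_eq_extremum)
  then have "emeasure \<nu> ({a<..s} \<times> B) = (INF i. emeasure \<nu> ({a<..r i} \<times> B))"
    unfolding Inter[symmetric] using \<open>0 \<le> a\<close> decseq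
    by (intro INF_emeasure_decseq'[symmetric] sets_strip) auto
  then show ?thesis
    using ge r_gt r_le by (auto intro: INF_greatest)
qed

lemma strip_unit_atom_exists:
  assumes "0 \<le> a"
    and one_le: "1 \<le> emeasure \<nu> ({a<..b} \<times> B)" and finite: "emeasure \<nu> ({a<..b} \<times> B) < \<infinity>"
    and nat_valued: "\<And>q. q \<in> \<rat> \<Longrightarrow> a < q \<Longrightarrow> q < b \<Longrightarrow> \<exists>m::nat. emeasure \<nu> ({a<..q} \<times> B) = of_nat m"
    and locally_le_one: "\<And>t. a < t \<Longrightarrow> t \<le> b \<Longrightarrow>
      \<exists>l r. 0 \<le> l \<and> l < t \<and> t \<le> r \<and> emeasure \<nu> ({l<..r} \<times> B) \<le> 1"
  shows "\<exists>s. a < s \<and> s \<le> b \<and> emeasure \<nu> ({s} \<times> B) = 1"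
proof -
  let ?F = "\<lambda>t. emeasure \<nu> ({a<..t} \<times> B)"
  \<comment> \<open>s is the first time at which ?F reaches 1: integrality at rationals makes ?F vanish
    before s, continuity from above makes it at least 1 at s.\<close>
  define Z where "Z = {t. a \<le> t \<and> t \<le> b \<and> 1 \<le> ?F t}"
  define s where "s = Inf Z"
  have "a \<le> b"
    using one_le by (cases "a \<le> b") auto
  then have "b \<in> Z" and bdd: "bdd_below Z"
    using one_le \<open>0 \<le> a\<close> strip_Ioc_mono[of a b a] by (auto simp: Z_def intro!: bdd_belowI[of _ a])
  then have "s \<le> b" and "a \<le> s"
    unfolding s_def by (auto intro: cInf_lower cInf_greatest simp: Z_def)
  have below_zero: "?F t = 0" if "a < t" "t < s" for t
  proof -
    obtain q where q: "q \<in> \<rat>" "t < q" "q < s"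
      using Rats_dense_in_real \<open>t < s\<close> by blast
    then have "q \<notin> Z"
      using bdd cInf_lower s_def by fastforce
    then have "?F q < 1"
      using q that \<open>s \<le> b\<close> by (auto simp: Z_def)
    moreover obtain m :: nat where "?F q = of_nat m"
      using nat_valued q that \<open>s \<le> b\<close> by fastforce
    ultimately have "?F q = 0"
      by (metis less_one of_nat_0 of_nat_less_iff ennreal_of_nat_eq_real_of_nat of_nat_1)
    then show ?thesis
      using strip_Ioc_mono[OF \<open>0 \<le> a\<close>, of t q] q by simp
  qed
  have at_s: "1 \<le> ?F s"
  proof (cases "s < b")
    case True
    show ?thesis
    proof (rule strip_Ioc_right_limit[OF \<open>0 \<le> a\<close> True finite])
      fix t assume "s < t" "t \<le> b"
      then obtain z where "z \<in> Z" "z < t"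
        using cInf_less_iff[OF _ bdd] \<open>b \<in> Z\<close> s_def by blast
      then show "1 \<le> ?F t"
        using strip_Ioc_mono[OF \<open>0 \<le> a\<close>, of z t] by (auto simp: Z_def)
    qed
  next
    case False
    then show ?thesis
      using \<open>s \<le> b\<close> one_le by simp
  qed
  then have "a < s"
    using \<open>a \<le> s\<close> by (cases "a = s") auto
  have "?F s = emeasure \<nu> ({a<..<s} \<times> B) + emeasure \<nu> ({s} \<times> B)"
    using \<open>0 \<le> a\<close> \<open>a < s\<close> by (subst plus_emeasure) (auto intro!: sets_strip arg_cong[where f = "emeasure \<nu>"])
  also have "emeasure \<nu> ({a<..<s} \<times> B) = 0"
    using null_strip_Ioo[OF \<open>0 \<le> a\<close> below_zero] by blast
  finally have "1 \<le> emeasure \<nu> ({s} \<times> B)"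
    using at_s by simp
  moreover obtain l r where "0 \<le> l" "l < s" "s \<le> r" and le_one: "emeasure \<nu> ({l<..r} \<times> B) \<le> 1"
    using locally_le_one \<open>a < s\<close> \<open>s \<le> b\<close> by blast
  then have "emeasure \<nu> ({s} \<times> B) \<le> emeasure \<nu> ({l<..r} \<times> B)"
    by (intro emeasure_mono sets_strip) auto
  then have "emeasure \<nu> ({s} \<times> B) \<le> 1"
    using le_one by (rule order.trans)
  ultimately show ?thesis
    using \<open>a < s\<close> \<open>s \<le> b\<close> by (intro exI[of _ s]) auto
qed

end

section \<open>Poisson random measures have unit atoms\<close>

definition grid_cell :: "real \<Rightarrow> real \<Rightarrow> nat \<Rightarrow> nat \<Rightarrow> real set" where
  "grid_cell a b n k = {a + (b - a) * k / n <.. a + (b - a) * (k + 1) / n}"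

lemma grid_cell_nonneg:
  assumes "0 \<le> a" "a \<le> b" shows "grid_cell a b n k \<subseteq> {0..}"
proof -
  have "0 \<le> (b - a) * k / n"
    using assms by simp
  show ?thesis
  proof
    fix x assume "x \<in> grid_cell a b n k"
    then have "a + (b - a) * k / n < x"
      by (simp add: grid_cell_def)
    then have "0 \<le> x"
      using \<open>0 \<le> a\<close> \<open>0 \<le> (b - a) * k / n\<close> by linarith
    then show "x \<in> {0..}" by simp
  qed
qed

lemma grid_cell_covers:
  assumes "a < t" "t \<le> b" "1 \<le> n"
  shows "\<exists>k<n. t \<in> grid_cell a b n k"
proof -
  define x where "x = (t - a) * n / (b - a)"
  have "0 < x" "x \<le> n"
    using assms by (auto simp: x_def divide_le_eq mult_right_mono)
  define k where "k = nat \<lceil>x\<rceil> - 1"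
  have "real k < x" "x \<le> real k + 1"
    using \<open>0 < x\<close> by (auto simp: k_def of_nat_diff) linarith+
  then have "k < n"
    using \<open>x \<le> n\<close> by (metis of_nat_less_iff order.strict_trans2)
  moreover have "t \<in> grid_cell a b n k"
    using \<open>real k < x\<close> \<open>x \<le> real k + 1\<close> assms by (auto simp: grid_cell_def x_def field_simps)
  ultimately show ?thesis by blast
qed

locale poisson_intensity = poisson_random_measure M "intensity \<sigma>" N
  for M :: "'w measure" and \<sigma> :: "'j measure" and N +
  assumes finite_\<sigma>: "finite_measure \<sigma>" and sets_\<sigma>: "sets \<sigma> = Pow UNIV"
begin

lemma strip_measure_count: "\<omega> \<in> space M \<Longrightarrow> strip_measure (N \<omega>) ({0<..c} \<times> UNIV)"
  using poisson sets_intensity_strip[OF finite_\<sigma> sets_\<sigma>] unfolding poisson_rm_def strip_measure_def by auto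

lemma prob_grid_multiple_point_le:
  assumes "0 \<le> a" "a \<le> b" "0 \<le> c" "1 \<le> n"
  shows "prob {\<omega>\<in>space M. \<exists>k<n. 1 < emeasure (N \<omega>) (grid_cell a b n k \<times> ({0<..c} \<times> UNIV))}
    \<le> ((b - a) * c * measure \<sigma> UNIV)\<^sup>2 / n"
proof -
  let ?cell = "\<lambda>k. grid_cell a b n k \<times> ({0<..c} \<times> UNIV)"
  have cell_sets: "?cell k \<in> sets (intensity \<sigma>)" for k
    using assms by (intro sets_intensity_strip[OF finite_\<sigma> sets_\<sigma>] grid_cell_nonneg) (auto simp: grid_cell_def)
  have cell_measure: "emeasure (intensity \<sigma>) (?cell k) = ennreal ((b - a) * c * measure \<sigma> UNIV / n)" for k
  proof -
    have "a + (b - a) * k / n \<le> a + (b - a) * (k + 1) / n"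
      using assms by (simp add: divide_right_mono mult_left_mono)
    then have "emeasure (intensity \<sigma>) (?cell k)
        = ennreal ((a + (b - a) * (k + 1) / n - (a + (b - a) * k / n)) * c * measure \<sigma> UNIV)"
      unfolding grid_cell_def using assms
      by (intro emeasure_intensity_strip_Ioc[OF finite_\<sigma> sets_\<sigma>]) auto
    also have "(a + (b - a) * (k + 1) / n - (a + (b - a) * k / n)) * c * measure \<sigma> UNIV
        = (b - a) * c * measure \<sigma> UNIV / n"
      using assms by (simp add: field_simps)
    finally show ?thesis .
  qed
  have "{\<omega>\<in>space M. \<exists>k<n. 1 < emeasure (N \<omega>) (?cell k)}
      = (\<Union>k<n. {\<omega>\<in>space M. 1 < emeasure (N \<omega>) (?cell k)})"
    by auto
  then have "prob {\<omega>\<in>space M. \<exists>k<n. 1 < emeasure (N \<omega>) (?cell k)}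
      \<le> (\<Sum>k<n. prob {\<omega>\<in>space M. 1 < emeasure (N \<omega>) (?cell k)})"
    using cell_sets by (auto intro!: finite_measure_subadditive_finite)
  also have "\<dots> \<le> (\<Sum>k<n. ((b - a) * c * measure \<sigma> UNIV / n)\<^sup>2)"
    using prob_count_gt_one_le[OF cell_sets] cell_measure assms
    by (intro sum_mono) (simp add: measure_def)
  also have "\<dots> = ((b - a) * c * measure \<sigma> UNIV)\<^sup>2 / n"
    using assms by (simp add: power2_eq_square)
  finally show ?thesis .
qed

lemma AE_grid_simple:
  assumes "0 \<le> a" "a \<le> b" "0 \<le> c"
  shows "AE \<omega> in M. \<exists>n\<ge>1. \<forall>k<n. emeasure (N \<omega>) (grid_cell a b n k \<times> ({0<..c} \<times> UNIV)) \<le> 1"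
proof -
  define bad where "bad n = {\<omega>\<in>space M. \<exists>k<n. 1 < emeasure (N \<omega>) (grid_cell a b n k \<times> ({0<..c} \<times> UNIV))}"
    for n
  define bound where "bound = ((b - a) * c * measure \<sigma> UNIV)\<^sup>2"
  have bad_sets: "bad n \<in> sets M" for n
    unfolding bad_def using assms by (measurable; intro sets_intensity_strip[OF finite_\<sigma> sets_\<sigma>] grid_cell_nonneg)
      (auto simp: grid_cell_def)
  have "prob (\<Inter>n. bad (Suc n)) \<le> bound / Suc n" for n
  proof -
    have "prob (\<Inter>n. bad (Suc n)) \<le> prob (bad (Suc n))"
      using bad_sets by (intro finite_measure_mono) auto
    also have "\<dots> \<le> bound / Suc n"
      unfolding bad_def bound_def using assms by (intro prob_grid_multiple_point_le) auto
    finally show ?thesis .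
  qed
  then have "prob (\<Inter>n. bad (Suc n)) \<le> 0"
    by (intro LIMSEQ_le_const[OF LIMSEQ_Suc[OF lim_const_over_n[of bound]]]) auto
  then have "(\<Inter>n. bad (Suc n)) \<in> null_sets M"
    using bad_sets measure_nonneg[of M "\<Inter>n. bad (Suc n)"]
    by (auto simp: emeasure_eq_measure intro!: null_setsI)
  then show ?thesis
  proof (rule AE_I')
    show "{\<omega>\<in>space M. \<not> (\<exists>n\<ge>1. \<forall>k<n. emeasure (N \<omega>) (grid_cell a b n k \<times> ({0<..c} \<times> UNIV)) \<le> 1)}
        \<subseteq> (\<Inter>n. bad (Suc n))"
      by (auto simp: bad_def not_le)
  qed
qed

lemma AE_strip_nat_valued:
  assumes "countable Q" "0 \<le> a" "0 \<le> c"
  shows "AE \<omega> in M. \<forall>q\<in>Q. a < q \<longrightarrow> (\<exists>m::nat. emeasure (N \<omega>) ({a<..q} \<times> ({0<..c} \<times> UNIV)) = of_nat m)"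
proof (rule AE_ball_countable'[OF _ \<open>countable Q\<close>])
  fix q
  have "AE \<omega> in M. \<exists>m::nat. emeasure (N \<omega>) ({a<..q} \<times> ({0<..c} \<times> UNIV)) = of_nat m" if "a < q"
    using that assms
    by (intro AE_count_nat sets_intensity_strip[OF finite_\<sigma> sets_\<sigma>])
      (auto simp: emeasure_intensity_strip_Ioc[OF finite_\<sigma> sets_\<sigma>])
  then show "AE \<omega> in M. a < q \<longrightarrow> (\<exists>m::nat. emeasure (N \<omega>) ({a<..q} \<times> ({0<..c} \<times> UNIV)) = of_nat m)"
    by (cases "a < q") auto
qed

lemma AE_strip_unit_atom:
  assumes "0 \<le> a" "a < b" "0 \<le> c"
  shows "AE \<omega> in M. emeasure (N \<omega>) ({a<..b} \<times> ({0<..c} \<times> UNIV)) \<noteq> 0 \<longrightarrow>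
    (\<exists>s. a < s \<and> s \<le> b \<and> emeasure (N \<omega>) ({s} \<times> ({0<..c} \<times> UNIV)) = 1)"
proof -
  let ?B = "{0<..c} \<times> UNIV"
  have "AE \<omega> in M. \<exists>n\<ge>1. \<forall>k<n. emeasure (N \<omega>) (grid_cell a b n k \<times> ?B) \<le> 1"
    using assms by (intro AE_grid_simple) auto
  moreover have "AE \<omega> in M. \<forall>q\<in>insert b \<rat>. a < q \<longrightarrow> (\<exists>m::nat. emeasure (N \<omega>) ({a<..q} \<times> ?B) = of_nat m)"
    using assms by (intro AE_strip_nat_valued) (auto simp: countable_rat)
  ultimately show ?thesis
    using AE_space
  proof eventually_elim
    case (elim \<omega>)
    then obtain n where n: "1 \<le> n" "\<And>k. k < n \<Longrightarrow> emeasure (N \<omega>) (grid_cell a b n k \<times> ?B) \<le> 1"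
      using assms by auto
    obtain m :: nat where m: "emeasure (N \<omega>) ({a<..b} \<times> ?B) = of_nat m"
      using elim assms by auto
    interpret strip_measure "N \<omega>" ?B
      using elim by (intro strip_measure_count) auto
    show ?case
    proof
      assume "emeasure (N \<omega>) ({a<..b} \<times> ?B) \<noteq> 0"
      show "\<exists>s. a < s \<and> s \<le> b \<and> emeasure (N \<omega>) ({s} \<times> ?B) = 1"
      proof (rule strip_unit_atom_exists[OF \<open>0 \<le> a\<close>])
        show "1 \<le> emeasure (N \<omega>) ({a<..b} \<times> ?B)" "emeasure (N \<omega>) ({a<..b} \<times> ?B) < \<infinity>"
          using m \<open>emeasure (N \<omega>) ({a<..b} \<times> ?B) \<noteq> 0\<close> by (cases m; simp add: of_nat_less_top)+
        show "\<exists>m::nat. emeasure (N \<omega>) ({a<..q} \<times> ?B) = of_nat m" if "q \<in> \<rat>" "a < q" "q < b" for q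
          using elim that by auto
        show "\<exists>l r. 0 \<le> l \<and> l < t \<and> t \<le> r \<and> emeasure (N \<omega>) ({l<..r} \<times> ?B) \<le> 1"
          if t: "a < t" "t \<le> b" for t
        proof -
          obtain k where "k < n" "t \<in> grid_cell a b n k"
            using grid_cell_covers[OF t n(1)] by blast
          moreover have "0 \<le> a + (b - a) * k / n"
            using assms by simp
          ultimately show ?thesis
            using n(2) unfolding grid_cell_def by (intro exI conjI) auto
        qed
      qed
    qed
  qed
qed

end

lemma prob_indep_rms_all_zero:
  fixes N :: "'v \<Rightarrow> 'w \<Rightarrow> 's measure"
  assumes "prob_space M" and indep: "indep_rms M \<mu> N V"
    and X: "\<And>v. v \<in> V \<Longrightarrow> X v \<in> sets \<mu>"
    and F: "finite F" "F \<noteq> {}" "F \<subseteq> V"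
  shows "measure M {\<omega>\<in>space M. \<forall>v\<in>F. emeasure (N v \<omega>) (X v) = 0}
       = (\<Prod>v\<in>F. measure M {\<omega>\<in>space M. emeasure (N v \<omega>) (X v) = 0})"
proof -
  interpret prob_space M by fact
  have "indep_vars (\<lambda>_. borel) (\<lambda>v \<omega>. (\<lambda>f. f (X v)) (\<lambda>A\<in>sets \<mu>. emeasure (N v \<omega>) A)) V"
    using indep unfolding indep_rms_def
    by (rule indep_vars_compose2) (rule measurable_component_singleton[OF X])
  then have "indep_vars (\<lambda>_. borel) (\<lambda>v \<omega>. emeasure (N v \<omega>) (X v)) V"
    by (rule indep_vars_cong[THEN iffD1, rotated 3]) (auto simp: X)
  then have "indep_sets (\<lambda>v. {(\<lambda>\<omega>. emeasure (N v \<omega>) (X v)) -` S \<inter> space M | S. S \<in> sets borel}) V"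
    unfolding indep_vars_def2 by auto
  then have "prob (\<Inter>v\<in>F. (\<lambda>\<omega>. emeasure (N v \<omega>) (X v)) -` {0} \<inter> space M)
      = (\<Prod>v\<in>F. prob ((\<lambda>\<omega>. emeasure (N v \<omega>) (X v)) -` {0} \<inter> space M))"
    by (rule indep_setsD[OF _ F(3,2,1)]) auto
  moreover have "(\<Inter>v\<in>F. (\<lambda>\<omega>. emeasure (N v \<omega>) (X v)) -` {0} \<inter> space M)
      = {\<omega>\<in>space M. \<forall>v\<in>F. emeasure (N v \<omega>) (X v) = 0}"
    using F(2) by auto
  ultimately show ?thesis
    by (simp add: vimage_def Int_def conj_commute)
qed

definition tree_level :: "nat \<Rightarrow> nat list set" where
  "tree_level k = {xs\<in>tree_V. length xs = k}"

definition tree_children :: "nat list \<Rightarrow> nat list set" where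
  "tree_children v = (\<lambda>j. v @ [j]) ` {..<4 ^ length v}"

lemma tree_children_subset: "v \<in> tree_V \<Longrightarrow> tree_children v \<subseteq> tree_V"
  unfolding tree_children_def tree_V_def by (auto simp: nth_append less_Suc_eq)

lemma tree_children_level: "v \<in> tree_level k \<Longrightarrow> tree_children v \<subseteq> tree_level (Suc k)"
  using tree_children_subset unfolding tree_level_def tree_children_def by auto

lemma tree_adj_child: "v \<in> tree_V \<Longrightarrow> w \<in> tree_children v \<Longrightarrow> tree_adj w v"
  using tree_children_subset unfolding tree_adj_def tree_children_def by auto

lemma finite_tree_children: "finite (tree_children v)"
  unfolding tree_children_def by simp

lemma card_tree_children: "card (tree_children v) = 4 ^ length v"
  unfolding tree_children_def by (subst card_image) (auto simp: inj_on_def)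

lemma tree_level_subset_lists: "tree_level k \<subseteq> {xs. set xs \<subseteq> {..<4 ^ k} \<and> length xs = k}"
proof safe
  fix xs x assume "xs \<in> tree_level k" "x \<in> set xs"
  then obtain i where "i < k" "x = xs ! i" "xs ! i < 4 ^ i"
    by (auto simp: tree_level_def tree_V_def in_set_conv_nth)
  moreover have "(4::nat) ^ i < 4 ^ k"
    using \<open>i < k\<close> by simp
  ultimately show "x < 4 ^ k"
    by (metis order.strict_trans)
qed (simp add: tree_level_def)

lemma finite_tree_level: "finite (tree_level k)"
  using finite_lists_length_eq[of "{..<4 ^ k}" k] by (rule finite_subset[OF tree_level_subset_lists]) simp

lemma card_tree_level_le: "card (tree_level k) \<le> 4 ^ (k * k)"
proof -
  have "card (tree_level k) \<le> card {xs. set xs \<subseteq> {..<4 ^ k::nat} \<and> length xs = k}"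
    by (intro card_mono tree_level_subset_lists finite_lists_length_eq) simp
  then show ?thesis
    by (simp add: card_lists_length_eq power_mult)
qed

lemma summable_four_pow_sq_exp:
  fixes \<kappa> :: real assumes "0 < \<kappa>"
  shows "summable (\<lambda>k::nat. 4 ^ (k * k) * exp (- \<kappa> * 2 ^ k / 4))"
proof (rule summable_comparison_test_ev[OF _ summable_geometric[of "1/2::real"]])
  have "((\<lambda>x::real. 4 powr (x\<^sup>2) * exp (- \<kappa> * 2 powr x / 4) * 2 powr x) \<longlongrightarrow> 0) at_top"
    using assms by real_asymp
  then have "((\<lambda>k::nat. 4 powr (real k)\<^sup>2 * exp (- \<kappa> * 2 powr real k / 4) * 2 powr real k) \<longlongrightarrow> 0) sequentially"
    by (rule filterlim_compose[OF _ filterlim_real_sequentially])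
  then have "eventually (\<lambda>k::nat. 4 powr (real k)\<^sup>2 * exp (- \<kappa> * 2 powr real k / 4) * 2 powr real k < 1) sequentially"
    by (rule order_tendstoD) simp
  then show "eventually (\<lambda>k. norm (4 ^ (k * k) * exp (- \<kappa> * 2 ^ k / 4)) \<le> (1 / 2) ^ k) sequentially"
  proof eventually_elim
    case (elim k)
    then have "4 ^ (k * k) * exp (- \<kappa> * 2 ^ k / 4) * 2 ^ k < (1::real)"
      by (simp add: powr_realpow power2_eq_square flip: of_nat_mult)
    then show ?case
      by (simp add: field_simps power_one_over)
  qed
qed simp

lemma infinite_causal_chain_of_descent:
  fixes p :: "nat \<Rightarrow> 'v" and t :: "nat \<Rightarrow> real"
  assumes "inj p" and adj: "\<And>n. adj (p (Suc n)) (p n)"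
    and t_Suc: "\<And>n. t (Suc n) < t n" and t_pos: "\<And>n. 0 < t n" and t_le: "\<And>n. t n \<le> T"
    and atom: "\<And>n. atom (p n) (t n)"
  shows "infinite_causal_chain adj atom T (p 0) p"
  unfolding infinite_causal_chain_def
proof (intro conjI allI)
  fix n
  define ws where "ws = rev (map p [0..<Suc n])"
  have ws_nth: "ws ! i = p (n - i)" if "i < Suc n" for i
    unfolding ws_def using that by (simp add: rev_nth del: upt_Suc)
  have "length ws = Suc n"
    by (simp add: ws_def)
  define s where "s i = (if i = 0 then 0 else t (n - i))" for i
  have "s i < s (Suc i)" if "Suc i < Suc n" for i
    using that t_pos t_Suc[of "n - Suc i"] by (auto simp: s_def Suc_diff_Suc)
  moreover have "s n \<le> T"
    using t_pos[of 0] t_le[of 0] by (simp add: s_def)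
  moreover have "ws \<noteq> []"
    using \<open>length ws = Suc n\<close> by auto
  moreover have "distinct ws"
    using \<open>inj p\<close> by (simp add: ws_def distinct_map inj_on_subset[OF \<open>inj p\<close>] del: upt_Suc)
  moreover have "adj (ws ! i) (ws ! Suc i)" if "Suc i < Suc n" for i
    using that adj[of "n - Suc i"] by (simp add: ws_nth Suc_diff_Suc)
  moreover have "atom (ws ! i) (s i)" if "1 \<le> i" "i < Suc n" for i
    using that atom[of "n - i"] by (simp add: ws_nth s_def)
  ultimately show "causal_chain adj atom 0 T (rev (map p [0..<Suc n]))"
    unfolding ws_def[symmetric] causal_chain_def \<open>length ws = Suc n\<close>
    by (intro conjI impI exI[of _ s]) (auto simp: s_def)
qed (use \<open>inj p\<close> in auto)

section \<open>The Poisson tree\<close>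

locale poisson_tree = prob_space M for M :: "'w measure" +
  fixes \<sigma> :: "'j measure" and N :: "nat list \<Rightarrow> 'w \<Rightarrow> (real \<times> real \<times> 'j) measure"
    and T :: real and C :: "nat \<Rightarrow> real"
  assumes T_pos: "0 < T" and C_pos: "\<And>k. 0 < C k" and mono_C: "mono C"
    and finite_\<sigma>: "finite_measure \<sigma>" and sets_\<sigma>: "sets \<sigma> = Pow UNIV"
    and \<sigma>_pos: "0 < emeasure \<sigma> UNIV"
    and poisson: "\<And>v. v \<in> tree_V \<Longrightarrow> poisson_rm M (intensity \<sigma>) (N v)"
    and indep: "indep_rms M (intensity \<sigma>) N tree_V"
begin

definition window :: "nat \<Rightarrow> real set" where
  "window d = {T / 2 ^ Suc d <.. T / 2 ^ d}"

definition marks :: "nat list \<Rightarrow> (real \<times> 'j) set" where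
  "marks v = {0<..C (card (tree_cl v))} \<times> UNIV"

definition lit :: "'w \<Rightarrow> nat list \<Rightarrow> bool" where
  "lit \<omega> v \<longleftrightarrow> emeasure (N v \<omega>) (window (length v) \<times> marks v) \<noteq> 0"

lemma poisson_intensity_vertex: "v \<in> tree_V \<Longrightarrow> poisson_intensity M \<sigma> (N v)"
  using poisson prob_space_axioms finite_\<sigma> sets_\<sigma>
  by (simp add: poisson_intensity_def poisson_intensity_axioms_def poisson_random_measure_def
      poisson_random_measure_axioms_def)

lemma window_pos: "s \<in> window d \<Longrightarrow> 0 < s"
proof -
  assume "s \<in> window d"
  then have "T / 2 ^ Suc d < s"
    by (simp add: window_def)
  moreover have "0 < T / 2 ^ Suc d"
    using T_pos by simp
  ultimately show ?thesis
    by linarith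
qed

lemma window_le: "s \<in> window d \<Longrightarrow> s \<le> T"
proof -
  assume "s \<in> window d"
  then have "s \<le> T / 2 ^ d"
    by (simp add: window_def)
  also have "\<dots> \<le> T / 1"
    using T_pos by (intro divide_left_mono) auto
  finally show ?thesis
    by simp
qed

lemma window_nonneg: "window d \<subseteq> {0..}"
  using window_pos by fastforce

lemma sets_window_marks: "window d \<times> marks v \<in> sets (intensity \<sigma>)"
  unfolding marks_def window_def using window_nonneg[of d]
  by (intro sets_intensity_strip[OF finite_\<sigma> sets_\<sigma>]) (auto simp: window_def)

lemma emeasure_window_marks:
  "emeasure (intensity \<sigma>) (window d \<times> marks v)
    = ennreal (T / 2 ^ Suc d * C (card (tree_cl v)) * measure \<sigma> UNIV)"
proof -
  have "T / 2 ^ d - T / 2 ^ Suc d = T / 2 ^ Suc d"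
    by (simp add: field_simps)
  then show ?thesis
    unfolding window_def marks_def using T_pos C_pos
    by (subst emeasure_intensity_strip_Ioc[OF finite_\<sigma> sets_\<sigma>])
      (auto simp: less_imp_le divide_left_mono)
qed

lemma measure_window_marks_ge:
  "T * C 0 * measure \<sigma> UNIV / 2 ^ Suc d \<le> measure (intensity \<sigma>) (window d \<times> marks v)"
proof -
  have "0 \<le> T / 2 ^ Suc d * C (card (tree_cl v)) * measure \<sigma> UNIV"
    using T_pos C_pos[of "card (tree_cl v)"] by simp
  then have "measure (intensity \<sigma>) (window d \<times> marks v)
      = T / 2 ^ Suc d * C (card (tree_cl v)) * measure \<sigma> UNIV"
    by (simp add: measure_def[of "intensity \<sigma>"] emeasure_window_marks)
  moreover have "C 0 \<le> C (card (tree_cl v))"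
    using mono_C by (simp add: monoD)
  ultimately show ?thesis
    using T_pos by (simp add: mult_left_mono mult_right_mono divide_right_mono)
qed

lemma prob_unlit_le:
  assumes "v \<in> tree_V"
  shows "prob {\<omega>\<in>space M. \<not> lit \<omega> v} \<le> exp (- (T * C 0 * measure \<sigma> UNIV / 2 ^ Suc (length v)))"
proof -
  interpret poisson_intensity M \<sigma> "N v"
    using assms by (rule poisson_intensity_vertex)
  have "prob {\<omega>\<in>space M. \<not> lit \<omega> v} = exp (- measure (intensity \<sigma>) (window (length v) \<times> marks v))"
    using prob_count_eq[OF sets_window_marks[of "length v" v], of 0] by (simp add: lit_def emeasure_window_marks)
  then show ?thesis
    using measure_window_marks_ge by simp
qed

lemma sets_unlit: "w \<in> tree_V \<Longrightarrow> {\<omega>\<in>space M. \<not> lit \<omega> w} \<in> sets M"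
proof -
  assume "w \<in> tree_V"
  then interpret poisson_intensity M \<sigma> "N w"
    by (rule poisson_intensity_vertex)
  note measurable_count[OF sets_window_marks, measurable]
  show ?thesis
    unfolding lit_def by measurable
qed

lemma prob_no_lit_child_le:
  assumes "v \<in> tree_level k"
  shows "prob {\<omega>\<in>space M. \<forall>w\<in>tree_children v. \<not> lit \<omega> w}
    \<le> exp (- (T * C 0 * measure \<sigma> UNIV * 2 ^ k / 4))"
proof -
  let ?\<kappa> = "T * C 0 * measure \<sigma> UNIV"
  have v: "v \<in> tree_V" "length v = k"
    using assms by (auto simp: tree_level_def)
  have children: "finite (tree_children v)" "tree_children v \<noteq> {}" "tree_children v \<subseteq> tree_V"
    using finite_tree_children card_tree_children[of v] tree_children_subset[OF v(1)] by auto
  have "prob {\<omega>\<in>space M. \<forall>w\<in>tree_children v. \<not> lit \<omega> w}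
      = (\<Prod>w\<in>tree_children v. prob {\<omega>\<in>space M. \<not> lit \<omega> w})"
    unfolding lit_def not_not
    by (rule prob_indep_rms_all_zero[OF prob_space_axioms indep, where X = "\<lambda>w. window (length w) \<times> marks w"])
      (use sets_window_marks children in auto)
  also have "\<dots> \<le> (\<Prod>w\<in>tree_children v. exp (- (?\<kappa> / 2 ^ Suc (Suc k))))"
  proof (intro prod_mono conjI)
    fix w assume "w \<in> tree_children v"
    then have "w \<in> tree_V" "length w = Suc k"
      using children(3) v(2) by (auto simp: tree_children_def)
    then show "prob {\<omega>\<in>space M. \<not> lit \<omega> w} \<le> exp (- (?\<kappa> / 2 ^ Suc (Suc k)))"
      using prob_unlit_le[of w] by (simp only:)
  qed simp
  also have "\<dots> = exp (real (4 ^ k) * - (?\<kappa> / 2 ^ Suc (Suc k)))"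
    by (simp only: prod_constant card_tree_children v(2) exp_of_nat_mult)
  also have "real (4 ^ k) * - (?\<kappa> / 2 ^ Suc (Suc k)) = - (?\<kappa> * 2 ^ k / 4)"
  proof -
    have "(4::real) ^ k = 2 ^ k * 2 ^ k"
      by (simp flip: power_mult_distrib)
    then show ?thesis
      by (simp add: field_simps)
  qed
  finally show ?thesis .
qed

lemma AE_eventually_lit_child:
  "AE \<omega> in M. \<exists>j0. \<forall>m\<ge>j0. \<forall>v\<in>tree_level m. \<exists>w\<in>tree_children v. lit \<omega> w"
proof -
  define bad where "bad k = (\<Union>v\<in>tree_level k. {\<omega>\<in>space M. \<forall>w\<in>tree_children v. \<not> lit \<omega> w})" for k
  have unlit_children_sets: "{\<omega>\<in>space M. \<forall>w\<in>tree_children v. \<not> lit \<omega> w} \<in> sets M"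
    if "v \<in> tree_level k" for v k
    using that tree_children_subset finite_tree_children
    by (intro sets.sets_Collect_finite_All sets_unlit) (auto simp: tree_level_def)
  have bad_sets: "bad k \<in> sets M" for k
    unfolding bad_def using finite_tree_level unlit_children_sets by blast
  have "prob (bad k) \<le> 4 ^ (k * k) * exp (- (T * C 0 * measure \<sigma> UNIV * 2 ^ k / 4))" for k
  proof -
    have "prob (bad k) \<le> (\<Sum>v\<in>tree_level k. prob {\<omega>\<in>space M. \<forall>w\<in>tree_children v. \<not> lit \<omega> w})"
      unfolding bad_def using unlit_children_sets finite_tree_level
      by (intro finite_measure_subadditive_finite) auto
    also have "\<dots> \<le> (\<Sum>v\<in>tree_level k. exp (- (T * C 0 * measure \<sigma> UNIV * 2 ^ k / 4)))"
      by (rule sum_mono) (rule prob_no_lit_child_le)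
    also have "\<dots> = card (tree_level k) * exp (- (T * C 0 * measure \<sigma> UNIV * 2 ^ k / 4))"
      by simp
    also have "\<dots> \<le> 4 ^ (k * k) * exp (- (T * C 0 * measure \<sigma> UNIV * 2 ^ k / 4))"
      using card_tree_level_le[of k] by (intro mult_right_mono) (auto simp flip: of_nat_le_iff)
    finally show ?thesis .
  qed
  moreover have "0 < T * C 0 * measure \<sigma> UNIV"
    using T_pos C_pos \<sigma>_pos finite_measure.emeasure_finite[OF finite_\<sigma>, of UNIV]
    by (simp add: measure_def enn2real_positive_iff top.not_eq_extremum)
  ultimately have "summable (\<lambda>k. prob (bad k))"
    by (intro summable_comparison_test'[OF summable_four_pow_sq_exp, of _ 0]) auto
  then have "AE \<omega> in M. eventually (\<lambda>k. \<omega> \<in> space M - bad k) sequentially"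
    using bad_sets by (intro borel_cantelli_AE1) (auto simp: emeasure_eq_measure)
  then show ?thesis
    by eventually_elim (auto simp: eventually_sequentially bad_def)
qed

lemma AE_lit_unit_atom:
  "AE \<omega> in M. \<forall>v\<in>tree_V. lit \<omega> v \<longrightarrow> (\<exists>s\<in>window (length v). NT_atom C (\<lambda>x. N x \<omega>) v s)"
proof (rule AE_ball_countable')
  fix v assume "v \<in> tree_V"
  then interpret poisson_intensity M \<sigma> "N v"
    by (rule poisson_intensity_vertex)
  have "AE \<omega> in M. lit \<omega> v \<longrightarrow>
      (\<exists>s. T / 2 ^ Suc (length v) < s \<and> s \<le> T / 2 ^ length v \<and> NT_atom C (\<lambda>x. N x \<omega>) v s)"
    unfolding lit_def window_def marks_def NT_atom_def using T_pos C_pos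
    by (intro AE_strip_unit_atom) (auto simp: less_imp_le divide_strict_left_mono)
  then show "AE \<omega> in M. lit \<omega> v \<longrightarrow> (\<exists>s\<in>window (length v). NT_atom C (\<lambda>x. N x \<omega>) v s)"
    by eventually_elim (auto simp: window_def)
qed simp

lemma window_Suc_less: "s \<in> window (Suc d) \<Longrightarrow> s' \<in> window d \<Longrightarrow> s < s'"
  by (auto simp: window_def)

lemma infinite_causal_chain_exists:
  fixes atom :: "nat list \<Rightarrow> real \<Rightarrow> bool"
  assumes "\<And>m v. j0 \<le> m \<Longrightarrow> v \<in> tree_level m \<Longrightarrow> \<exists>w\<in>tree_children v. \<exists>s\<in>window (length w). atom w s"
  shows "\<exists>u us. u \<in> tree_V \<and> infinite_causal_chain tree_adj atom T u us"
proof -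
  have step: "\<exists>w s. w \<in> tree_level (Suc m) \<and> s \<in> window (Suc m) \<and> atom w s \<and> tree_adj w v"
    if m: "j0 \<le> m" and v: "v \<in> tree_level m" for m v
  proof -
    obtain w s where w: "w \<in> tree_children v" and "s \<in> window (length w)" "atom w s"
      using assms[OF m v] by blast
    moreover have "w \<in> tree_level (Suc m)"
      using tree_children_level[OF v] w by blast
    moreover have "tree_adj w v"
      using v w tree_adj_child by (simp add: tree_level_def)
    ultimately show ?thesis
      by (auto simp: tree_level_def)
  qed
  define P where "P n x \<longleftrightarrow> fst x \<in> tree_level (Suc (j0 + n)) \<and> snd x \<in> window (Suc (j0 + n)) \<and> atom (fst x) (snd x)"
    for n x
  have "replicate j0 0 \<in> tree_level j0"
    by (simp add: tree_level_def tree_V_def)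
  then have "\<exists>x. P 0 x"
    using step[of j0] unfolding P_def by fastforce
  moreover have "\<exists>y. P (Suc n) y \<and> tree_adj (fst y) (fst x)" if "P n x" for n x
    using that step[of "Suc (j0 + n)" "fst x"] by (auto simp: P_def)
  ultimately obtain f where f: "\<And>n. P n (f n)" "\<And>n. tree_adj (fst (f (Suc n))) (fst (f n))"
    using dependent_nat_choice[of P "\<lambda>n x y. tree_adj (fst y) (fst x)"] by blast
  define p where "p n = fst (f n)" for n
  define t where "t n = snd (f n)" for n
  have p: "p n \<in> tree_V" "length (p n) = Suc (j0 + n)" and t: "t n \<in> window (Suc (j0 + n))"
    and atom: "atom (p n) (t n)" for n
    using f(1)[of n] by (simp_all add: P_def p_def t_def tree_level_def)
  have adj: "tree_adj (p (Suc n)) (p n)" for n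
    using f(2) by (simp add: p_def)
  have "inj p"
    by (rule injI) (metis p(2) Suc_inject add_left_cancel)
  moreover have "t (Suc n) < t n" for n
    using window_Suc_less t[of "Suc n"] t[of n] by simp
  ultimately have "infinite_causal_chain tree_adj atom T (p 0) p"
    using adj window_pos[OF t] window_le[OF t] atom
    by (intro infinite_causal_chain_of_descent[where t = t]) auto
  then show ?thesis
    using p(1) by blast
qed

end

theorem mainTheorem12:
  fixes M :: "'w measure"
    and \<sigma> :: "'j::countable measure"
    and N :: "nat list \<Rightarrow> 'w \<Rightarrow> (real \<times> real \<times> 'j) measure"
    and T :: real
    and C :: "nat \<Rightarrow> real"
  assumes "prob_space M"
    and "T > 0"
    and "\<And>k. C k > 0"
    and "mono C"
    and "finite_measure \<sigma>"
    and "space \<sigma> = UNIV" and "sets \<sigma> = Pow UNIV"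
    and "emeasure \<sigma> UNIV > 0"
    and "\<And>v. v \<in> tree_V \<Longrightarrow> poisson_rm M (intensity \<sigma>) (N v)"
    and "indep_rms M (intensity \<sigma>) N tree_V"
  shows "AE \<omega> in M. \<exists>u us. u \<in> tree_V \<and>
           infinite_causal_chain tree_adj (\<lambda>v s. NT_atom C (\<lambda>x. N x \<omega>) v s) T u us"
proof -
  interpret poisson_tree M \<sigma> N T C
    using assms by (intro poisson_tree.intro poisson_tree_axioms.intro) auto
  show ?thesis
    using AE_eventually_lit_child AE_lit_unit_atom
  proof eventually_elim
    case (elim \<omega>)
    then obtain j0 where j0: "\<forall>m\<ge>j0. \<forall>v\<in>tree_level m. \<exists>w\<in>tree_children v. lit \<omega> w"
      by blast
    have "\<exists>w\<in>tree_children v. \<exists>s\<in>window (length w). NT_atom C (\<lambda>x. N x \<omega>) w s"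
      if m: "j0 \<le> m" and v: "v \<in> tree_level m" for m v
    proof -
      obtain w where w: "w \<in> tree_children v" "lit \<omega> w"
        using j0 m v by blast
      moreover have "w \<in> tree_V"
        using v w(1) tree_children_subset by (auto simp: tree_level_def)
      ultimately show ?thesis
        using elim(2) by blast
    qed
    then show ?case
      by (rule infinite_causal_chain_exists)
  qed
qed

end
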